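(* Let $(X_1,\dots,X_d)$, $d\ge 3$, be a binary random vector following a determinantal point process with correlation kernel $K$, where $K$ is a real symmetric $d\times d$ matrix with all eigenvalues strictly in $(0,1)$, all entries of $K$ are nonzero, and $K_{1i}>0$ for all $i=2,\dots,d$. Then: (i) $K_{ii}=\mathbb{P}[X_i=1]=\mathbb{E}[X_i]$ for all $i=1,\dots,d$; (ii) for all $i<j$, $-\mathrm{Cov}(X_i,X_j)>0$ and $|K_{ij}|=\sqrt{K_{ii}K_{jj}-\mathbb{P}[X_i=X_j=1]}=\sqrt{-\mathrm{Cov}(X_i,X_j)}$; (iii) for all $1<i<j\le d$, $$\mathrm{sgn}(K_{ij})=\mathrm{sgn}\Big(\mathbb{P}[X_1=1,X_i=1,X_j=1]-K_{11}K_{ii}K_{jj}+K_{11}K_{ij}^2+K_{ii}K_{1j}^2+K_{jj}K_{1i}^2\Big),$$ and this sign is $\pm1$ (never $0$). Consequently every entry of $K$ is uniquely determined by the marginal, pairwise, and threewise probabilities $\mathbb{P}[X_i=1]$, $\mathbb{P}[X_i=X_j=1]$, $\mathbb{P}[X_1=X_i=X_j=1]$.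
   Context: A binary random vector $(X_1,\dots,X_d)$ follows a determinantal point process (DPP) with correlation kernel $K$ if, writing $S=\{j: X_j=1\}$, one has $\mathbb{P}[s\subseteq S]=\mathbb{P}[X_j=1\ \forall j\in s]=\det K_s$ for all $s\subseteq\{1,\dots,d\}$, where $K_s=[K_{ij}]_{i,j\in s}$ is the principal submatrix indexed by $s$. Here $\mathrm{sgn}(x)=1$ if $x>0$, $-1$ if $x<0$, $0$ if $x=0$. *)

theory Defs
  imports "HOL-Probability.Probability" "Jordan_Normal_Form.Matrix" "Jordan_Normal_Form.Determinant"
    "Jordan_Normal_Form.Char_Poly" "Jordan_Normal_Form.DL_Submatrix"
begin

(* Coordinates are 0-based: the random vector (X_1,...,X_d) of the paper is
   (X 0, ..., X (d-1)); the random set S = {j. X_j = 1} is modelled by a pmf on nat set. *)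

definition coord :: "nat \<Rightarrow> nat set \<Rightarrow> real" where
  "coord i S = (if i \<in> S then 1 else 0)"

definition cov_pmf :: "'a pmf \<Rightarrow> ('a \<Rightarrow> real) \<Rightarrow> ('a \<Rightarrow> real) \<Rightarrow> real" where
  "cov_pmf P X Y = measure_pmf.expectation P
     (\<lambda>w. (X w - measure_pmf.expectation P X) * (Y w - measure_pmf.expectation P Y))"

definition dpp :: "nat set pmf \<Rightarrow> real mat \<Rightarrow> bool" where
  "dpp P K = (\<forall>s. s \<subseteq> {0..<dim_row K} \<longrightarrow>
      measure_pmf.prob P {S. s \<subseteq> S} = det (submatrix K s s))"

(* the standing hypotheses on the kernel in Proposition 3 (index 0 plays the role of index 1) *)
definition good_kernel :: "nat \<Rightarrow> real mat \<Rightarrow> bool" where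
  "good_kernel d K = (K \<in> carrier_mat d d \<and> transpose_mat K = K
     \<and> (\<forall>l. eigenvalue K l \<longrightarrow> 0 < l \<and> l < 1)
     \<and> (\<forall>i<d. \<forall>j<d. K $$ (i,j) \<noteq> 0)
     \<and> (\<forall>i. 1 \<le> i \<and> i < d \<longrightarrow> K $$ (0,i) > 0))"

end

theory Submission
  imports Defs
begin

text \<open>The principal minors of order one, two and three of a symmetric kernel are K(i,i),
  K(i,i) K(j,j) - K(i,j)^2 and
  K(h,h) K(i,i) K(j,j) + 2 K(h,i) K(i,j) K(h,j) - K(h,h) K(i,j)^2 - K(i,i) K(h,j)^2 - K(j,j) K(h,i)^2.
  Hence the marginal probabilities give the diagonal, the pairwise ones give K(i,j)^2 (which is
  also minus the covariance of X_i and X_j), and the threewise ones with h = 0 give the cycle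
  term 2 K(0,i) K(0,j) K(i,j). Since the first row of K is positive, the cycle term has the sign
  of K(i,j): the pairwise probabilities fix the first row and the threewise ones all remaining
  entries.\<close>

lemma det_mat_2x2:
  assumes "(A :: 'a :: comm_ring_1 mat) \<in> carrier_mat 2 2"
  shows "det A = A $$ (0,0) * A $$ (1,1) - A $$ (0,1) * A $$ (1,0)"
proof -
  have "det A = (\<Sum>j<2. A $$ (0,j) * cofactor A 0 j)"
    by (rule laplace_expansion_row[OF assms]) simp
  also have "\<dots> = A $$ (0,0) * A $$ (1,1) - A $$ (0,1) * A $$ (1,0)"
    using assms by (simp add: numeral_2_eq_2 cofactor_def det_single mat_delete_def)
  finally show ?thesis .
qed

lemma det_mat_3x3:
  assumes "(A :: 'a :: comm_ring_1 mat) \<in> carrier_mat 3 3"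
  shows "det A = A $$ (0,0) * A $$ (1,1) * A $$ (2,2) + A $$ (0,1) * A $$ (1,2) * A $$ (2,0)
    + A $$ (0,2) * A $$ (1,0) * A $$ (2,1) - A $$ (0,2) * A $$ (1,1) * A $$ (2,0)
    - A $$ (0,0) * A $$ (1,2) * A $$ (2,1) - A $$ (0,1) * A $$ (1,0) * A $$ (2,2)"
proof -
  have cofactors: "cofactor A 0 0 = A $$ (1,1) * A $$ (2,2) - A $$ (1,2) * A $$ (2,1)"
    "cofactor A 0 1 = A $$ (1,2) * A $$ (2,0) - A $$ (1,0) * A $$ (2,2)"
    "cofactor A 0 2 = A $$ (1,0) * A $$ (2,1) - A $$ (1,1) * A $$ (2,0)"
    using assms by (simp_all add: cofactor_def det_mat_2x2 mat_delete_def eval_nat_numeral)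
  have "det A = (\<Sum>j<3. A $$ (0,j) * cofactor A 0 j)"
    by (rule laplace_expansion_row[OF assms]) simp
  also have "\<dots> = A $$ (0,0) * cofactor A 0 0 + A $$ (0,1) * cofactor A 0 1
      + A $$ (0,2) * cofactor A 0 2"
    by (simp add: eval_nat_numeral)
  finally show ?thesis
    unfolding cofactors by (simp add: algebra_simps)
qed

lemma principal_submatrix_carrier:
  assumes "A \<in> carrier_mat n n" "I \<subseteq> {0..<n}"
  shows "submatrix A I I \<in> carrier_mat (card I) (card I)"
proof -
  have "{i. i < dim_row A \<and> i \<in> I} = I" "{i. i < dim_col A \<and> i \<in> I} = I"
    using assms by auto
  then show ?thesis
    unfolding carrier_mat_def mem_Collect_eq dim_submatrix by simp
qed

lemma principal_submatrix_index:
  assumes "A \<in> carrier_mat n n" "I \<subseteq> {0..<n}" "i \<in> I" "j \<in> I"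
    and "card {a \<in> I. a < i} = p" "card {a \<in> I. a < j} = q"
  shows "submatrix A I I $$ (p,q) = A $$ (i,j)"
proof -
  have "i < n" "j < n"
    using assms(2-4) by auto
  then show ?thesis
    using submatrix_index_card[of i A j I I] assms(1,3,4) unfolding assms(5,6)[symmetric] by simp
qed

lemma det_principal_submatrix_singleton:
  assumes "A \<in> carrier_mat n n" "i < n"
  shows "det (submatrix A {i} {i}) = A $$ (i,i)"
proof -
  have "submatrix A {i} {i} \<in> carrier_mat 1 1"
    using principal_submatrix_carrier[OF assms(1), of "{i}"] assms(2) by simp
  moreover have "submatrix A {i} {i} $$ (0,0) = A $$ (i,i)"
    by (rule principal_submatrix_index[OF assms(1)]) (use assms(2) in auto)
  ultimately show ?thesis
    by (simp add: det_single)
qed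

lemma det_principal_submatrix_pair:
  assumes "A \<in> carrier_mat n n" "i < j" "j < n"
  shows "det (submatrix A {i,j} {i,j}) = A $$ (i,i) * A $$ (j,j) - A $$ (i,j) * A $$ (j,i)"
proof -
  let ?B = "submatrix A {i,j} {i,j}"
  have "?B \<in> carrier_mat (card {i,j}) (card {i,j})" "card {i,j} = 2"
    using principal_submatrix_carrier[OF assms(1), of "{i,j}"] assms(2,3) by auto
  then have "?B \<in> carrier_mat 2 2"
    by (simp only:)
  moreover have "{a \<in> {i,j}. a < i} = {}" "{a \<in> {i,j}. a < j} = {i}"
    using assms(2) by auto
  then have positions: "card {a \<in> {i,j}. a < i} = 0" "card {a \<in> {i,j}. a < j} = 1"
    by simp_all
  have "{i,j} \<subseteq> {0..<n}"
    using assms(2,3) by auto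
  note entry = principal_submatrix_index[OF assms(1) this]
  have "?B $$ (0,0) = A $$ (i,i)" "?B $$ (0,1) = A $$ (i,j)"
    "?B $$ (1,0) = A $$ (j,i)" "?B $$ (1,1) = A $$ (j,j)"
    by (rule entry, simp, simp, rule positions, rule positions)+
  ultimately show ?thesis
    by (simp add: det_mat_2x2)
qed

lemma det_principal_submatrix_triple:
  assumes "A \<in> carrier_mat n n" "h < i" "i < j" "j < n"
  shows "det (submatrix A {h,i,j} {h,i,j}) =
      A $$ (h,h) * A $$ (i,i) * A $$ (j,j) + A $$ (h,i) * A $$ (i,j) * A $$ (j,h)
    + A $$ (h,j) * A $$ (i,h) * A $$ (j,i) - A $$ (h,j) * A $$ (i,i) * A $$ (j,h)
    - A $$ (h,h) * A $$ (i,j) * A $$ (j,i) - A $$ (h,i) * A $$ (i,h) * A $$ (j,j)"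
proof -
  let ?B = "submatrix A {h,i,j} {h,i,j}"
  have "?B \<in> carrier_mat (card {h,i,j}) (card {h,i,j})" "card {h,i,j} = 3"
    using principal_submatrix_carrier[OF assms(1), of "{h,i,j}"] assms(2-4) by auto
  then have "?B \<in> carrier_mat 3 3"
    by (simp only:)
  moreover have "{a \<in> {h,i,j}. a < h} = {}" "{a \<in> {h,i,j}. a < i} = {h}"
    "{a \<in> {h,i,j}. a < j} = {h,i}"
    using assms(2,3) by auto
  then have positions: "card {a \<in> {h,i,j}. a < h} = 0" "card {a \<in> {h,i,j}. a < i} = 1"
    "card {a \<in> {h,i,j}. a < j} = 2"
    using assms(2) by simp_all
  have "{h,i,j} \<subseteq> {0..<n}"
    using assms(2-4) by auto
  note entry = principal_submatrix_index[OF assms(1) this]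
  have "?B $$ (0,0) = A $$ (h,h)" "?B $$ (0,1) = A $$ (h,i)" "?B $$ (0,2) = A $$ (h,j)"
    "?B $$ (1,0) = A $$ (i,h)" "?B $$ (1,1) = A $$ (i,i)" "?B $$ (1,2) = A $$ (i,j)"
    "?B $$ (2,0) = A $$ (j,h)" "?B $$ (2,1) = A $$ (j,i)" "?B $$ (2,2) = A $$ (j,j)"
    by (rule entry, simp, simp, rule positions, rule positions)+
  ultimately show ?thesis
    by (simp add: det_mat_3x3)
qed

lemma symmetric_mat_entry:
  assumes "A \<in> carrier_mat n n" "transpose_mat A = A" "i < n" "j < n"
  shows "A $$ (j,i) = A $$ (i,j)"
  by (metis assms carrier_matD index_transpose_mat(1))

lemma symmetric_mat_eqI:
  assumes "A \<in> carrier_mat n n" "transpose_mat A = A" "B \<in> carrier_mat n n" "transpose_mat B = B"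
    and upper: "\<And>i j. i \<le> j \<Longrightarrow> j < n \<Longrightarrow> A $$ (i,j) = B $$ (i,j)"
  shows "A = B"
proof (rule eq_matI)
  fix i j
  assume "i < dim_row B" "j < dim_col B"
  then have "i < n" "j < n"
    using assms(3) by auto
  then show "A $$ (i,j) = B $$ (i,j)"
    using upper symmetric_mat_entry[OF assms(1,2)] symmetric_mat_entry[OF assms(3,4)]
    by (metis nat_le_linear)
qed (use assms(1,3) in auto)

lemma dpp_prob_superset:
  assumes "dpp P K" "K \<in> carrier_mat d d" "s \<subseteq> {0..<d}"
  shows "measure_pmf.prob P {S. s \<subseteq> S} = det (submatrix K s s)"
  using assms unfolding dpp_def by auto

lemma dpp_prob_mem:
  assumes "dpp P K" "K \<in> carrier_mat d d" "i < d"
  shows "measure_pmf.prob P {S. i \<in> S} = K $$ (i,i)"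
  using dpp_prob_superset[OF assms(1,2), of "{i}"] det_principal_submatrix_singleton[OF assms(2,3)] assms(3)
  by simp

lemma dpp_prob_mem2:
  assumes "dpp P K" "K \<in> carrier_mat d d" "transpose_mat K = K" "i < j" "j < d"
  shows "measure_pmf.prob P {S. i \<in> S \<and> j \<in> S} = K $$ (i,i) * K $$ (j,j) - (K $$ (i,j))\<^sup>2"
proof -
  have "measure_pmf.prob P {S. i \<in> S \<and> j \<in> S} = det (submatrix K {i,j} {i,j})"
    using dpp_prob_superset[OF assms(1,2), of "{i,j}"] assms(4,5) by simp
  also have "\<dots> = K $$ (i,i) * K $$ (j,j) - K $$ (i,j) * K $$ (j,i)"
    using det_principal_submatrix_pair[OF assms(2,4,5)] .
  finally show ?thesis
    using symmetric_mat_entry[OF assms(2,3), of i j] assms(4,5) by (simp add: power2_eq_square)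
qed

lemma dpp_prob_mem3:
  assumes "dpp P K" "K \<in> carrier_mat d d" "transpose_mat K = K" "h < i" "i < j" "j < d"
  shows "measure_pmf.prob P {S. h \<in> S \<and> i \<in> S \<and> j \<in> S} =
      K $$ (h,h) * K $$ (i,i) * K $$ (j,j) + 2 * K $$ (h,i) * K $$ (i,j) * K $$ (h,j)
    - K $$ (h,h) * (K $$ (i,j))\<^sup>2 - K $$ (i,i) * (K $$ (h,j))\<^sup>2 - K $$ (j,j) * (K $$ (h,i))\<^sup>2"
proof -
  have "measure_pmf.prob P {S. h \<in> S \<and> i \<in> S \<and> j \<in> S} = det (submatrix K {h,i,j} {h,i,j})"
    using dpp_prob_superset[OF assms(1,2), of "{h,i,j}"] assms(4-6) by simp
  moreover have "K $$ (i,h) = K $$ (h,i)" "K $$ (j,h) = K $$ (h,j)" "K $$ (j,i) = K $$ (i,j)"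
    using symmetric_mat_entry[OF assms(2,3)] assms(4-6) by auto
  ultimately show ?thesis
    using det_principal_submatrix_triple[OF assms(2,4-6)] by (simp add: algebra_simps power2_eq_square)
qed

lemma expectation_coord: "measure_pmf.expectation P (coord i) = measure_pmf.prob P {S. i \<in> S}"
proof -
  have "coord i = indicator {S. i \<in> S}"
    by (auto simp: coord_def indicator_def)
  then show ?thesis
    by simp
qed

lemma cov_pmf_coord:
  "cov_pmf P (coord i) (coord j) = measure_pmf.prob P {S. i \<in> S \<and> j \<in> S}
     - measure_pmf.prob P {S. i \<in> S} * measure_pmf.prob P {S. j \<in> S}"
proof -
  define a b where "a = measure_pmf.prob P {S. i \<in> S}" and "b = measure_pmf.prob P {S. j \<in> S}"
  have "(\<lambda>S. (coord i S - a) * (coord j S - b)) = (\<lambda>S. indicator {S. i \<in> S \<and> j \<in> S} S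
      - b * indicator {S. i \<in> S} S - a * indicator {S. j \<in> S} S + a * b)"
    by (auto simp: coord_def indicator_def fun_eq_iff algebra_simps)
  moreover have "integrable (measure_pmf P) (indicator A :: nat set \<Rightarrow> real)" for A
    by (simp add: measure_pmf.emeasure_finite less_top[symmetric])
  ultimately have "cov_pmf P (coord i) (coord j)
      = measure_pmf.prob P {S. i \<in> S \<and> j \<in> S} - b * a - a * b + a * b"
    by (simp add: cov_pmf_def expectation_coord a_def b_def)
  then show ?thesis
    by (simp add: a_def b_def)
qed

lemma dpp_neg_cov_coord:
  assumes "dpp P K" "K \<in> carrier_mat d d" "transpose_mat K = K" "i < j" "j < d"
  shows "- cov_pmf P (coord i) (coord j) = (K $$ (i,j))\<^sup>2"
  using assms dpp_prob_mem2[OF assms] dpp_prob_mem[OF assms(1,2)] by (simp add: cov_pmf_coord)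

lemma dpp_prob_mem3_cycle_term:
  assumes "dpp P K" "K \<in> carrier_mat d d" "transpose_mat K = K" "h < i" "i < j" "j < d"
  shows "measure_pmf.prob P {S. h \<in> S \<and> i \<in> S \<and> j \<in> S}
      - K $$ (h,h) * K $$ (i,i) * K $$ (j,j) + K $$ (h,h) * (K $$ (i,j))\<^sup>2
      + K $$ (i,i) * (K $$ (h,j))\<^sup>2 + K $$ (j,j) * (K $$ (h,i))\<^sup>2
    = 2 * K $$ (h,i) * K $$ (h,j) * K $$ (i,j)"
  using dpp_prob_mem3[OF assms] by simp

lemma good_kernelD:
  assumes "good_kernel d K"
  shows "K \<in> carrier_mat d d" "transpose_mat K = K"
    and "\<And>i j. i < d \<Longrightarrow> j < d \<Longrightarrow> K $$ (i,j) \<noteq> 0"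
    and "\<And>j. 0 < j \<Longrightarrow> j < d \<Longrightarrow> 0 < K $$ (0,j)"
  using assms unfolding good_kernel_def by auto

lemma good_kernel_dpp_unique:
  assumes K: "good_kernel d K" "dpp P K" and K': "good_kernel d K'" "dpp P' K'"
    and mem: "\<forall>i<d. measure_pmf.prob P' {S. i \<in> S} = measure_pmf.prob P {S. i \<in> S}"
    and mem2: "\<forall>i j. i < j \<and> j < d \<longrightarrow> measure_pmf.prob P' {S. i \<in> S \<and> j \<in> S}
                                    = measure_pmf.prob P {S. i \<in> S \<and> j \<in> S}"
    and mem3: "\<forall>i j. 0 < i \<and> i < j \<and> j < d \<longrightarrow> measure_pmf.prob P' {S. 0 \<in> S \<and> i \<in> S \<and> j \<in> S}
                                    = measure_pmf.prob P {S. 0 \<in> S \<and> i \<in> S \<and> j \<in> S}"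
  shows "K' = K"
proof -
  note KD = good_kernelD[OF K(1)] and K'D = good_kernelD[OF K'(1)]
  have diag: "K' $$ (i,i) = K $$ (i,i)" if "i < d" for i
    using mem dpp_prob_mem[OF K(2) KD(1) that] dpp_prob_mem[OF K'(2) K'D(1) that] that by simp
  have square: "(K' $$ (i,j))\<^sup>2 = (K $$ (i,j))\<^sup>2" if "i < j" "j < d" for i j
    using mem2 dpp_prob_mem2[OF K(2) KD(1,2) that] dpp_prob_mem2[OF K'(2) K'D(1,2) that]
      diag[of i] diag[of j] that by simp
  have first_row: "K' $$ (0,j) = K $$ (0,j)" if "0 < j" "j < d" for j
    using square[OF that] KD(4)[OF that] K'D(4)[OF that] by (simp add: power2_eq_iff_nonneg)
  have cycle: "K' $$ (0,i) * K' $$ (0,j) * K' $$ (i,j) = K $$ (0,i) * K $$ (0,j) * K $$ (i,j)"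
    if "0 < i" "i < j" "j < d" for i j
    using mem3 dpp_prob_mem3_cycle_term[OF K(2) KD(1,2) that]
      dpp_prob_mem3_cycle_term[OF K'(2) K'D(1,2) that] diag[of 0] diag[of i] diag[of j] square[of 0 i] square[of 0 j] square[of i j] that by simp
  have "K' $$ (i,j) = K $$ (i,j)" if ij: "i \<le> j" "j < d" for i j
  proof -
    consider "i = j" | "i = 0" "0 < j" | "0 < i" "i < j"
      using ij(1) by fastforce
    then show ?thesis
    proof cases
      case 3
      then show ?thesis
        using cycle[OF 3 ij(2)] first_row[of i] first_row[of j] KD(4)[of i] KD(4)[of j] ij(2) by simp
    qed (use diag first_row ij in auto)
  qed
  then show ?thesis
    using symmetric_mat_eqI[OF K'D(1,2) KD(1,2)] by blast
qed

theorem proposition3: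
  fixes P :: "nat set pmf" and K :: "real mat" and d :: nat
  assumes "d \<ge> 3" and "good_kernel d K" and "dpp P K"
  shows
   "(\<forall>i<d. K $$ (i,i) = measure_pmf.prob P {S. i \<in> S}
            \<and> measure_pmf.prob P {S. i \<in> S} = measure_pmf.expectation P (coord i))
    \<and> (\<forall>i j. i < j \<and> j < d \<longrightarrow>
          - cov_pmf P (coord i) (coord j) > 0
        \<and> \<bar>K $$ (i,j)\<bar> = sqrt (K $$ (i,i) * K $$ (j,j) - measure_pmf.prob P {S. i \<in> S \<and> j \<in> S})
        \<and> sqrt (K $$ (i,i) * K $$ (j,j) - measure_pmf.prob P {S. i \<in> S \<and> j \<in> S})
            = sqrt (- cov_pmf P (coord i) (coord j)))
    \<and> (\<forall>i j. 0 < i \<and> i < j \<and> j < d \<longrightarrow>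
          sgn (K $$ (i,j)) = sgn (measure_pmf.prob P {S. 0 \<in> S \<and> i \<in> S \<and> j \<in> S}
               - K $$ (0,0) * K $$ (i,i) * K $$ (j,j) + K $$ (0,0) * (K $$ (i,j))^2
               + K $$ (i,i) * (K $$ (0,j))^2 + K $$ (j,j) * (K $$ (0,i))^2)
        \<and> sgn (K $$ (i,j)) \<in> {1, -1})
    \<and> (\<forall>P' K'. good_kernel d K' \<and> dpp P' K'
          \<and> (\<forall>i<d. measure_pmf.prob P' {S. i \<in> S} = measure_pmf.prob P {S. i \<in> S})
          \<and> (\<forall>i j. i < j \<and> j < d \<longrightarrow> measure_pmf.prob P' {S. i \<in> S \<and> j \<in> S}
                                    = measure_pmf.prob P {S. i \<in> S \<and> j \<in> S})
          \<and> (\<forall>i j. 0 < i \<and> i < j \<and> j < d \<longrightarrow> measure_pmf.prob P' {S. 0 \<in> S \<and> i \<in> S \<and> j \<in> S}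
                                    = measure_pmf.prob P {S. 0 \<in> S \<and> i \<in> S \<and> j \<in> S})
          \<longrightarrow> K' = K)"
proof -
  note KD = good_kernelD[OF assms(2)]
  have "K $$ (i,j) \<noteq> 0" if "i < j \<and> j < d" for i j
    using KD(3) that by simp
  moreover have "- cov_pmf P (coord i) (coord j) = (K $$ (i,j))\<^sup>2"
    and "K $$ (i,i) * K $$ (j,j) - measure_pmf.prob P {S. i \<in> S \<and> j \<in> S} = (K $$ (i,j))\<^sup>2"
    if "i < j \<and> j < d" for i j
    using dpp_neg_cov_coord[OF assms(3) KD(1,2)] dpp_prob_mem2[OF assms(3) KD(1,2)] that by auto
  moreover have "sgn (measure_pmf.prob P {S. 0 \<in> S \<and> i \<in> S \<and> j \<in> S}
      - K $$ (0,0) * K $$ (i,i) * K $$ (j,j) + K $$ (0,0) * (K $$ (i,j))\<^sup>2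
      + K $$ (i,i) * (K $$ (0,j))\<^sup>2 + K $$ (j,j) * (K $$ (0,i))\<^sup>2) = sgn (K $$ (i,j))"
    if "0 < i \<and> i < j \<and> j < d" for i j
  proof -
    have "sgn (2 * K $$ (0,i) * K $$ (0,j)) = 1"
      using KD(4)[of i] KD(4)[of j] that by simp
    then show ?thesis
      using dpp_prob_mem3_cycle_term[OF assms(3) KD(1,2), of 0 i j] that by (simp add: sgn_mult)
  qed
  ultimately show ?thesis
    using dpp_prob_mem[OF assms(3) KD(1)] expectation_coord good_kernel_dpp_unique[OF assms(2,3)]
    by (auto simp: sgn_if)
qed

end
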